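(* Let $\mathcal{G}_1,\dots,\mathcal{G}_m$ be signed digraphs on $\{1,\dots,n\}$ with signed Laplacians $L_1,\dots,L_m$, and assume each $L_k$ is weight balanced and each $-L_k$ is EEP. Let $Q\in\mathbb{R}^{(n-1)\times n}$ satisfy $QQ^\top=I_{n-1}$ and $Q\mathbf{1}=0$. If there exists a symmetric positive definite $P\in\mathbb{R}^{n\times n}$ such that \[ -QL_kPQ^\top-QPL_k^\top Q^\top\prec 0\quad\text{for all }k=1,\dots,m, \] then $\mathbb{L}=\{L_1,\dots,L_m\}$ is a consensus set for the switched system $\dot{\mathbf{x}}=-L_{\sigma(t)}\mathbf{x}$.
   Context: For a signed digraph with real weighted adjacency matrix $A$ (entries of any sign), the signed Laplacian is $L=\Sigma-A$, $\Sigma=\mathrm{diag}(\sigma_i)$, $\sigma_i=\sum_jA_{ij}$, so $L\mathbf{1}=0$; weight balanced means $L^\top\mathbf{1}=0$. $M$ is EEP if there is $t_0\ge0$ with $e^{Mt}$ entrywise positive for all real $t\ge t_0$. $X\prec0$ means $X$ is symmetric negative definite. A switching signal is a piecewise constant map $\sigma:[0,\infty)\to\{1,\dots,m\}$ with finitely many discontinuities on every bounded interval. $\mathbb{L}$ is a consensus set if for every switching signal and every $\mathbf{x}(0)$ there is $\alpha\in\mathbb{R}$ with $\lim_{t\to\infty}\mathbf{x}(t)=\alpha\mathbf{1}$. *)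

theory Defs
  imports "HOL-Analysis.Analysis"
begin

definition ones :: "real^'n" where
  "ones = (\<chi> i. 1)"

definition signed_laplacian :: "real^'n^'n \<Rightarrow> real^'n^'n" where
  "signed_laplacian A = (\<chi> i j. (if i = j then (\<Sum>l\<in>UNIV. A $ i $ l) else 0) - A $ i $ j)"

definition weight_balanced :: "real^'n^'n \<Rightarrow> bool" where
  "weight_balanced L \<longleftrightarrow> transpose L *v ones = 0"

fun mat_pow :: "real^'n^'n \<Rightarrow> nat \<Rightarrow> real^'n^'n" where
  "mat_pow M 0 = mat 1"
| "mat_pow M (Suc k) = M ** mat_pow M k"

definition mat_exp :: "real^'n^'n \<Rightarrow> real^'n^'n" where
  "mat_exp M = (\<Sum>k. (1 / fact k) *\<^sub>R mat_pow M k)"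

definition EEP :: "real^'n^'n \<Rightarrow> bool" where
  "EEP M \<longleftrightarrow> (\<exists>t0\<ge>0. \<forall>t\<ge>t0. \<forall>i j. mat_exp (t *\<^sub>R M) $ i $ j > 0)"

definition symmetric_mat :: "real^'n^'n \<Rightarrow> bool" where
  "symmetric_mat X \<longleftrightarrow> transpose X = X"

definition pos_def :: "real^'n^'n \<Rightarrow> bool" where
  "pos_def X \<longleftrightarrow> symmetric_mat X \<and> (\<forall>v. v \<noteq> 0 \<longrightarrow> v \<bullet> (X *v v) > 0)"

definition neg_def :: "real^'n^'n \<Rightarrow> bool" where
  "neg_def X \<longleftrightarrow> symmetric_mat X \<and> (\<forall>v. v \<noteq> 0 \<longrightarrow> v \<bullet> (X *v v) < 0)"

definition switching_signal :: "nat \<Rightarrow> (real \<Rightarrow> nat) \<Rightarrow> bool" where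
  "switching_signal m \<sigma> \<longleftrightarrow>
     (\<forall>t\<ge>0. \<sigma> t \<in> {1..m}) \<and>
     (\<forall>T. finite {t\<in>{0..T}. \<not> continuous (at t within {0..}) \<sigma>})"

definition switched_solution ::
  "(nat \<Rightarrow> real^'n^'n) \<Rightarrow> (real \<Rightarrow> nat) \<Rightarrow> (real \<Rightarrow> real^'n) \<Rightarrow> bool" where
  "switched_solution L \<sigma> x \<longleftrightarrow>
     continuous_on {0..} x \<and>
     (\<forall>t>0. continuous (at t) \<sigma> \<longrightarrow>
        (x has_vector_derivative (- (L (\<sigma> t) *v x t))) (at t))"

definition consensus_set :: "nat \<Rightarrow> (nat \<Rightarrow> real^'n^'n) \<Rightarrow> bool" where
  "consensus_set m L \<longleftrightarrow>
     (\<forall>\<sigma> x. switching_signal m \<sigma> \<and> switched_solution L \<sigma> x \<longrightarrow>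
        (\<exists>\<alpha>::real. (x \<longlongrightarrow> \<alpha> *\<^sub>R ones) at_top))"

end

theory Submission imports Defs "HOL-Real_Asymp.Real_Asymp" begin

text \<open>Write \<open>y = Q x\<close> for the disagreement vector. Since every signed Laplacian annihilates
  \<open>\<one>\<close> and the rows of \<open>Q\<close> span \<open>\<one>\<^sup>\<bottom>\<close>, \<open>y\<close> solves the reduced switched system
  \<open>y' = - Q L\<^sub>\<sigma> Q\<^sup>T y\<close>, and with \<open>X = Q P Q\<^sup>T\<close> the LMI says exactly that
  \<open>V(y) = y\<^sup>T X\<^sup>-\<^sup>1 y\<close> is a common quadratic Lyapunov function for it, decaying at a uniform
  exponential rate; hence \<open>y \<rightarrow> 0\<close>. Weight balance makes the average \<open>\<one>\<^sup>T x\<close> invariant,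
  so \<open>x\<close> converges to the average times \<open>\<one>\<close>.\<close>

declare transpose_matrix_vector[simp del]

subsection \<open>Matrices\<close>

lemma inner_transpose_mult:
  fixes A :: "real^'n^'m"
  shows "(transpose A *v u) \<bullet> w = u \<bullet> (A *v w)"
  by (metis dot_lmul_matrix transpose_matrix_vector)

lemma inner_ones_ones: "ones \<bullet> (ones::real^'n) = real CARD('n)"
  by (simp add: ones_def inner_vec_def)

lemma signed_laplacian_mult_ones: "signed_laplacian A *v ones = (0::real^'n)"
proof -
  have "(signed_laplacian A *v ones) $ i = 0" for i
  proof -
    have "(signed_laplacian A *v ones) $ i
        = (\<Sum>j\<in>UNIV. (if i = j then (\<Sum>l\<in>UNIV. A$i$l) else 0) - A$i$j)"
      by (simp add: signed_laplacian_def matrix_vector_mult_def ones_def)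
    also have "\<dots> = (\<Sum>j\<in>UNIV. (if i = j then (\<Sum>l\<in>UNIV. A$i$l) else 0)) - (\<Sum>j\<in>UNIV. A$i$j)"
      by (rule sum_subtractf)
    finally show ?thesis by simp
  qed
  then show ?thesis by (simp add: vec_eq_iff)
qed

lemma orthonormal_complement_ones_decomposition:
  fixes Q :: "real^'n^'q"
  assumes dimQ: "CARD('q) + 1 = CARD('n)" and QQ: "Q ** transpose Q = mat 1"
    and Q1: "Q *v ones = 0"
  shows "v = transpose Q *v (Q *v v) + ((ones \<bullet> v) / real CARD('n)) *\<^sub>R ones"
proof -
  let ?f = "\<lambda>u::real^'q. transpose Q *v u"
  define S where "S = range ?f"
  have QQu: "Q *v (transpose Q *v u) = u" for u
    by (simp add: matrix_vector_mul_assoc QQ)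
  have inj: "inj_on ?f (span UNIV)"
    by (metis QQu inj_on_def)
  have dS: "dim S = CARD('q)"
    using dim_image_eq[OF matrix_vector_mul_linear inj] by (simp add: S_def)
  have subS: "subspace S"
    unfolding S_def using linear_subspace_image[OF matrix_vector_mul_linear subspace_UNIV] by simp
  have ones_orth: "?f u \<bullet> ones = 0" for u
    using inner_transpose_mult[of Q u ones] Q1 by simp
  have "ones \<notin> span S"
  proof
    assume "ones \<in> span S"
    then obtain u where "ones = ?f u" using subS unfolding S_def by (metis span_eq_iff rangeE)
    then show False using ones_orth[of u] inner_ones_ones[where 'n='n] by simp
  qed
  then have "span (insert ones S) = UNIV"
    using dS dimQ dim_eq_full[of "insert ones S"] by (simp add: dim_insert)
  then obtain k where "v - k *\<^sub>R ones \<in> span S" by (auto simp: span_insert)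
  then obtain u where u: "v - k *\<^sub>R ones = ?f u" using subS unfolding S_def
    by (metis span_eq_iff rangeE)
  then have "Q *v (v - k *\<^sub>R ones) = u" using QQu by simp
  then have "Q *v v = u" by (simp add: matrix_vector_mult_diff_distrib matrix_vector_mult_scaleR Q1)
  then have v: "v = ?f (Q *v v) + k *\<^sub>R ones" using u by (simp add: algebra_simps)
  then have "ones \<bullet> v = k * real CARD('n)"
    by (metis ones_orth inner_ones_ones inner_add_right inner_commute inner_scaleR_right add_0)
  then show ?thesis using v by simp
qed

lemma mult_projection_onto_orthonormal_complement:
  fixes Q :: "real^'n^'q" and L :: "real^'n^'m"
  assumes dimQ: "CARD('q) + 1 = CARD('n)" and QQ: "Q ** transpose Q = mat 1"
    and Q1: "Q *v ones = 0" and L1: "L *v ones = 0"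
  shows "L ** transpose Q ** Q = L"
proof -
  have "(L ** transpose Q ** Q) *v v = L *v v" for v
    using arg_cong[OF orthonormal_complement_ones_decomposition[OF dimQ QQ Q1, of v], of "(*v) L"]
    by (simp add: matrix_vector_mul_assoc matrix_mul_assoc matrix_vector_right_distrib
        matrix_vector_mult_scaleR L1)
  then show ?thesis by (simp add: matrix_eq)
qed

lemma matrix_vector_mult_uminus_left: "(- A) *v v = - ((A::real^'n^'m) *v v)"
  by (simp add: vec_eq_iff matrix_vector_mult_def sum_negf)

lemma matrix_vector_mult_uminus_right: "A *v (- v) = - ((A::real^'n^'m) *v v)"
  by (simp add: vec_eq_iff matrix_vector_mult_def sum_negf)

subsection \<open>Quadratic forms\<close>

lemma quadratic_form_scaleR:
  "(a *\<^sub>R v) \<bullet> ((M::real^'n^'n) *v (a *\<^sub>R v)) = a\<^sup>2 * (v \<bullet> (M *v v))"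
  by (simp add: matrix_vector_mult_scaleR power2_eq_square)

lemma quadratic_form_coercive:
  fixes M :: "real^'n^'n"
  assumes pos: "\<And>v. v \<noteq> 0 \<Longrightarrow> v \<bullet> (M *v v) > 0"
  shows "\<exists>c>0. \<forall>v. c * (norm v)\<^sup>2 \<le> v \<bullet> (M *v v)"
proof -
  let ?f = "\<lambda>v. v \<bullet> (M *v v)"
  have "continuous_on (sphere 0 1) ?f"
    by (intro continuous_intros bounded_linear.continuous_on[OF matrix_vector_mul_bounded_linear])
  moreover have "sphere (0::real^'n) 1 \<noteq> {}" by simp
  ultimately obtain u where u: "u \<in> sphere 0 1" "\<forall>v\<in>sphere 0 1. ?f u \<le> ?f v"
    using continuous_attains_inf[OF compact_sphere] by blast
  have "?f u * (norm v)\<^sup>2 \<le> ?f v" for v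
  proof (cases "v = 0")
    case False
    then have "(1 / norm v) *\<^sub>R v \<in> sphere 0 1" by simp
    then have "?f u \<le> ?f ((1 / norm v) *\<^sub>R v)" using u(2) by blast
    also have "\<dots> = (1 / norm v)\<^sup>2 * ?f v" by (rule quadratic_form_scaleR)
    finally have "?f u * (norm v)\<^sup>2 \<le> (1 / norm v)\<^sup>2 * ?f v * (norm v)\<^sup>2"
      by (simp add: mult_right_mono)
    also have "\<dots> = ?f v" using False by (simp add: field_simps)
    finally show ?thesis .
  qed simp
  moreover have "u \<noteq> 0" using u(1) by auto
  ultimately show ?thesis using pos by blast
qed

lemma quadratic_form_bounded:
  fixes M :: "real^'n^'n"
  obtains K where "K > 0" "\<And>v. v \<bullet> (M *v v) \<le> K * (norm v)\<^sup>2"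
proof -
  obtain K where K: "K > 0" "\<And>v. norm (M *v v) \<le> norm v * K"
    using bounded_linear.pos_bounded[OF matrix_vector_mul_bounded_linear[of M]] by blast
  have "v \<bullet> (M *v v) \<le> K * (norm v)\<^sup>2" for v
  proof -
    have "v \<bullet> (M *v v) \<le> norm v * norm (M *v v)" by (rule norm_cauchy_schwarz)
    also have "\<dots> \<le> norm v * (norm v * K)" using K(2) by (simp add: mult_left_mono)
    finally show ?thesis by (simp add: power2_eq_square algebra_simps)
  qed
  with K(1) show ?thesis using that by blast
qed

lemma neg_def_uniform_bound:
  fixes M :: "'k \<Rightarrow> real^'n^'n"
  assumes "finite K" and "\<forall>k\<in>K. neg_def (M k)"
  shows "\<exists>c>0. \<forall>k\<in>K. \<forall>v::real^'n. v \<bullet> (M k *v v) \<le> - c * (norm v)\<^sup>2"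
  using assms
proof (induction K rule: finite_induct)
  case empty
  show ?case by (intro exI[of _ 1]) simp
next
  case (insert k K)
  then obtain c where c: "c > 0" "\<forall>j\<in>K. \<forall>v. v \<bullet> (M j *v v) \<le> - c * (norm v)\<^sup>2"
    by blast
  have "\<And>v. v \<noteq> 0 \<Longrightarrow> v \<bullet> ((- M k) *v v) > 0"
    using insert.prems by (simp add: neg_def_def matrix_vector_mult_uminus_left)
  then obtain d where d: "d > 0" "\<forall>v. d * (norm v)\<^sup>2 \<le> v \<bullet> ((- M k) *v v)"
    using quadratic_form_coercive by blast
  have "\<forall>j\<in>insert k K. \<forall>v. v \<bullet> (M j *v v) \<le> - min c d * (norm v)\<^sup>2"
  proof (intro ballI allI)
    fix j and v :: "real^'n" assume j: "j \<in> insert k K"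
    have "v \<bullet> (M k *v v) \<le> - d * (norm v)\<^sup>2"
      using d(2)[rule_format, of v] by (simp add: matrix_vector_mult_uminus_left)
    moreover have "min c d * (norm v)\<^sup>2 \<le> c * (norm v)\<^sup>2" "min c d * (norm v)\<^sup>2 \<le> d * (norm v)\<^sup>2"
      by (simp_all add: mult_right_mono)
    moreover have "j \<in> K \<Longrightarrow> v \<bullet> (M j *v v) \<le> - c * (norm v)\<^sup>2"
      using c(2) by blast
    ultimately show "v \<bullet> (M j *v v) \<le> - min c d * (norm v)\<^sup>2"
      using j by (cases "j = k") auto
  qed
  with c(1) d(1) show ?case by (intro exI[of _ "min c d"]) simp
qed

lemma quadratic_form_symmetrize:
  fixes G :: "real^'n^'n"
  shows "w \<bullet> ((- G - transpose G) *v w) = - 2 * (w \<bullet> (G *v w))"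
  using inner_transpose_mult[of G w w]
  by (simp add: matrix_vector_mult_diff_rdistrib matrix_vector_mult_uminus_left inner_diff_right
      inner_commute)

lemma pos_def_congruence:
  fixes P :: "real^'n^'n" and Q :: "real^'n^'q"
  assumes P: "pos_def P" and inj: "\<And>w. transpose Q *v w = 0 \<Longrightarrow> w = 0"
  shows "pos_def (Q ** P ** transpose Q)"
proof -
  have "w \<bullet> ((Q ** P ** transpose Q) *v w) = (transpose Q *v w) \<bullet> (P *v (transpose Q *v w))" for w
    by (simp add: matrix_vector_mul_assoc[symmetric] inner_transpose_mult)
  moreover have "transpose (Q ** P ** transpose Q) = Q ** P ** transpose Q"
    using P by (simp add: pos_def_def symmetric_mat_def matrix_transpose_mul matrix_mul_assoc)
  ultimately show ?thesis
    using P inj unfolding pos_def_def symmetric_mat_def by auto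
qed

lemma pos_def_inverse:
  fixes X :: "real^'n^'n"
  assumes X: "pos_def X"
  obtains B where "B ** X = mat 1" "X ** B = mat 1" "pos_def B"
proof -
  have Xsym: "transpose X = X" using X by (simp add: pos_def_def symmetric_mat_def)
  have "\<forall>w. X *v w = 0 \<longrightarrow> w = 0" using X unfolding pos_def_def by force
  then obtain B where BX: "B ** X = mat 1" using matrix_left_invertible_ker by blast
  then have XB: "X ** B = mat 1" using matrix_left_right_inverse by blast
  have "transpose B ** X = mat 1"
    using XB by (metis Xsym matrix_transpose_mul transpose_mat)
  then have Bsym: "transpose B = B"
    by (metis XB matrix_mul_assoc matrix_mul_lid matrix_mul_rid)
  have "v \<bullet> (B *v v) > 0" if "v \<noteq> 0" for v
  proof -
    have "v = X *v (B *v v)" by (simp add: matrix_vector_mul_assoc XB)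
    then have "B *v v \<noteq> 0" "v \<bullet> (B *v v) = (B *v v) \<bullet> (X *v (B *v v))"
      using that by (metis matrix_vector_mult_0_right, metis inner_commute)
    then show ?thesis using X unfolding pos_def_def by simp
  qed
  with Bsym have "pos_def B" unfolding pos_def_def symmetric_mat_def by blast
  with BX XB show ?thesis using that by blast
qed

subsection \<open>Switching signals and switched solutions\<close>

lemma switching_signal_nonincreasing:
  fixes g g' :: "real \<Rightarrow> real"
  assumes sw: "switching_signal m \<sigma>" and cont: "continuous_on {0..} g"
    and der: "\<And>t. t > 0 \<Longrightarrow> continuous (at t) \<sigma> \<Longrightarrow> (g has_real_derivative g' t) (at t)"
    and nonpos: "\<And>t. t \<ge> 0 \<Longrightarrow> g' t \<le> 0" and T: "T \<ge> 0"
  shows "g T \<le> g 0"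
proof -
  define S where "S = {t\<in>{0..T}. \<not> continuous (at t within {0..}) \<sigma>}"
  have fin: "finite S" using sw unfolding switching_signal_def S_def by blast
  have "(g' has_integral (g T - g 0)) {0..T}"
  proof (rule fundamental_theorem_of_calculus_interior_strong[OF fin T])
    fix t assume t: "t \<in> {0<..<T} - S"
    moreover have "at t within {0..} = at t"
      using t by (intro at_within_interior) auto
    ultimately have "continuous (at t) \<sigma>" unfolding S_def by auto
    then show "(g has_vector_derivative g' t) (at t)"
      using der t by (auto simp: has_real_derivative_iff_has_vector_derivative)
  qed (use cont in \<open>auto intro: continuous_on_subset\<close>)
  then have "0 \<le> - (g T - g 0)"
    by (rule has_integral_nonneg[OF has_integral_neg]) (use nonpos in auto)
  then show ?thesis by simp
qed

lemma switching_signal_exponential_decay: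
  fixes f f' :: "real \<Rightarrow> real"
  assumes sw: "switching_signal m \<sigma>" and cont: "continuous_on {0..} f"
    and der: "\<And>t. t > 0 \<Longrightarrow> continuous (at t) \<sigma> \<Longrightarrow> (f has_real_derivative f' t) (at t)"
    and rate: "\<And>t. t \<ge> 0 \<Longrightarrow> f' t \<le> - \<beta> * f t" and t: "t \<ge> 0"
  shows "f t \<le> exp (- \<beta> * t) * f 0"
proof -
  have "exp (\<beta> * t) * f t \<le> exp (\<beta> * 0) * f 0"
  proof (rule switching_signal_nonincreasing[OF sw _ _ _ t])
    show "continuous_on {0..} (\<lambda>t. exp (\<beta> * t) * f t)"
      by (intro continuous_intros cont)
    show "((\<lambda>t. exp (\<beta> * t) * f t) has_real_derivative
           exp (\<beta> * s) * (\<beta> * f s + f' s)) (at s)"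
      if "s > 0" "continuous (at s) \<sigma>" for s
      using der[OF that] by (auto intro!: derivative_eq_intros simp: algebra_simps)
    show "exp (\<beta> * s) * (\<beta> * f s + f' s) \<le> 0" if "s \<ge> 0" for s
      using rate[OF that] by (simp add: mult_nonneg_nonpos)
  qed
  then show ?thesis by (simp add: exp_minus field_simps)
qed

lemma switched_solution_linear_image:
  fixes Q :: "real^'n^'q"
  assumes sol: "switched_solution L \<sigma> x" and intertwine: "\<And>k. Q ** L k = H k ** Q"
  shows "switched_solution H \<sigma> (\<lambda>t. Q *v x t)"
  unfolding switched_solution_def
proof (intro conjI allI impI)
  show "continuous_on {0..} (\<lambda>t. Q *v x t)"
    using sol unfolding switched_solution_def
    by (blast intro: bounded_linear.continuous_on[OF matrix_vector_mul_bounded_linear])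
  fix t :: real assume "t > 0" "continuous (at t) \<sigma>"
  then have "(x has_vector_derivative - (L (\<sigma> t) *v x t)) (at t)"
    using sol unfolding switched_solution_def by blast
  from bounded_linear.has_vector_derivative[OF matrix_vector_mul_bounded_linear this, of Q]
  show "((\<lambda>t. Q *v x t) has_vector_derivative - (H (\<sigma> t) *v (Q *v x t))) (at t)"
    by (simp add: matrix_vector_mul_assoc intertwine matrix_vector_mult_uminus_right)
qed

lemma weight_balanced_average_constant:
  assumes sw: "switching_signal m \<sigma>" and sol: "switched_solution L \<sigma> x"
    and bal: "\<forall>k\<in>{1..m}. weight_balanced (L k)" and t: "t \<ge> 0"
  shows "ones \<bullet> x t = ones \<bullet> x 0"
proof -
  have cont: "continuous_on {0..} (\<lambda>t. c * (ones \<bullet> x t))" for c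
    using sol unfolding switched_solution_def by (intro continuous_intros) auto
  have der: "((\<lambda>t. c * (ones \<bullet> x t)) has_real_derivative 0) (at s)"
    if "s > 0" "continuous (at s) \<sigma>" for s c
  proof -
    have "\<sigma> s \<in> {1..m}" using sw that(1) unfolding switching_signal_def by simp
    then have "ones \<bullet> (L (\<sigma> s) *v x s) = 0"
      using bal inner_transpose_mult[of "L (\<sigma> s)" ones "x s"] by (simp add: weight_balanced_def)
    moreover have "(x has_vector_derivative - (L (\<sigma> s) *v x s)) (at s)"
      using sol that unfolding switched_solution_def by blast
    note bounded_linear.has_vector_derivative[OF bounded_linear_inner_right this, of ones]
    ultimately have "((\<lambda>t. ones \<bullet> x t) has_real_derivative 0) (at s)"
      by (simp add: has_real_derivative_iff_has_vector_derivative)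
    from DERIV_cmult[OF this, of c] show ?thesis by simp
  qed
  have "c * (ones \<bullet> x t) \<le> c * (ones \<bullet> x 0)" for c
    by (rule switching_signal_nonincreasing[OF sw cont der _ t]) auto
  from this[of 1] this[of "-1"] show ?thesis by simp
qed

subsection \<open>Common quadratic Lyapunov functions\<close>

lemma quadratic_form_has_derivative:
  fixes B :: "real^'n^'n"
  assumes Bsym: "transpose B = B" and y: "(y has_vector_derivative y') (at t)"
  shows "((\<lambda>t. y t \<bullet> (B *v y t)) has_real_derivative 2 * ((B *v y t) \<bullet> y')) (at t)"
proof -
  have "((\<lambda>t. y t \<bullet> (B *v y t)) has_vector_derivative y t \<bullet> (B *v y') + y' \<bullet> (B *v y t)) (at t)"
    by (rule bounded_bilinear.has_vector_derivative[OF bounded_bilinear_inner y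
          bounded_linear.has_vector_derivative[OF matrix_vector_mul_bounded_linear y]])
  moreover have "y t \<bullet> (B *v y') = y' \<bullet> (B *v y t)"
    using inner_transpose_mult[of B "y t" y'] Bsym by (simp add: inner_commute)
  ultimately show ?thesis
    by (simp add: has_real_derivative_iff_has_vector_derivative inner_commute)
qed

text \<open>With \<open>w = B z\<close>, the derivative \<open>- 2 (B z)\<^sup>T G z\<close> of \<open>z\<^sup>T B z\<close> along \<open>z' = - G z\<close> is the
  quadratic form of \<open>- G X - (G X)\<^sup>T\<close> at \<open>w\<close>, while \<open>z\<^sup>T B z = w\<^sup>T X w\<close>.\<close>

lemma inverse_quadratic_form_decay_rate:
  fixes X B G :: "real^'n^'n"
  assumes XB: "X ** B = mat 1" and KX: "KX > 0" "\<And>w. w \<bullet> (X *v w) \<le> KX * (norm w)\<^sup>2"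
    and c: "c \<ge> 0" "\<And>w. w \<bullet> ((- (G ** X) - transpose (G ** X)) *v w) \<le> - c * (norm w)\<^sup>2"
  shows "- 2 * ((B *v z) \<bullet> (G *v z)) \<le> - (c / KX) * (z \<bullet> (B *v z))"
proof -
  define w where "w = B *v z"
  have z: "z = X *v w" by (simp add: w_def matrix_vector_mul_assoc XB)
  have "G *v z = (G ** X) *v w"
    by (simp add: z matrix_vector_mul_assoc)
  then have "- 2 * ((B *v z) \<bullet> (G *v z)) = w \<bullet> ((- (G ** X) - transpose (G ** X)) *v w)"
    by (simp add: quadratic_form_symmetrize flip: w_def)
  also have "\<dots> \<le> - c * (norm w)\<^sup>2" by (rule c(2))
  also have "\<dots> \<le> - (c / KX) * (w \<bullet> (X *v w))"
    using mult_left_mono[OF KX(2)[of w], of "c / KX"] KX(1) c(1) by simp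
  also have "w \<bullet> (X *v w) = z \<bullet> (B *v z)"
    by (metis z w_def inner_commute)
  finally show ?thesis .
qed

lemma common_lyapunov_convergence:
  fixes H :: "nat \<Rightarrow> real^'q^'q"
  assumes sw: "switching_signal m \<sigma>" and sol: "switched_solution H \<sigma> y"
    and X: "pos_def X"
    and lmi: "\<forall>k\<in>{1..m}. neg_def (- (H k ** X) - transpose (H k ** X))"
  shows "(y \<longlongrightarrow> 0) at_top"
proof -
  obtain B where XB: "X ** B = mat 1" and B: "pos_def B"
    using pos_def_inverse[OF X] by blast
  define V where "V z = z \<bullet> (B *v z)" for z
  define V' where "V' t = 2 * ((B *v y t) \<bullet> - (H (\<sigma> t) *v y t))" for t
  obtain c where c: "c > 0"
    "\<forall>k\<in>{1..m}. \<forall>w. w \<bullet> ((- (H k ** X) - transpose (H k ** X)) *v w) \<le> - c * (norm w)\<^sup>2"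
    using neg_def_uniform_bound[OF finite_atLeastAtMost lmi] by blast
  obtain KX where KX: "KX > 0" "\<And>w. w \<bullet> (X *v w) \<le> KX * (norm w)\<^sup>2"
    using quadratic_form_bounded by blast
  obtain d where d: "d > 0" "\<forall>z. d * (norm z)\<^sup>2 \<le> V z"
    using quadratic_form_coercive[of B] B unfolding pos_def_def V_def by blast
  define \<beta> where "\<beta> = c / KX"
  have cont: "continuous_on {0..} (\<lambda>t. V (y t))"
    using sol unfolding switched_solution_def V_def
    by (intro continuous_intros bounded_linear.continuous_on[OF matrix_vector_mul_bounded_linear])
      auto
  have der: "((\<lambda>t. V (y t)) has_real_derivative V' t) (at t)"
    if "t > 0" "continuous (at t) \<sigma>" for t
    using sol that B unfolding switched_solution_def V_def V'_def pos_def_def symmetric_mat_def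
    by (blast intro: quadratic_form_has_derivative)
  have rate: "V' t \<le> - \<beta> * V (y t)" if "t \<ge> 0" for t
  proof -
    have "\<sigma> t \<in> {1..m}" using sw that unfolding switching_signal_def by blast
    have "V' t = - 2 * ((B *v y t) \<bullet> (H (\<sigma> t) *v y t))" by (simp add: V'_def)
    also have "\<dots> \<le> - \<beta> * V (y t)"
      unfolding V_def \<beta>_def
      by (rule inverse_quadratic_form_decay_rate[OF XB KX]) (use c \<open>\<sigma> t \<in> {1..m}\<close> in auto)
    finally show ?thesis .
  qed
  have "((\<lambda>t. exp (- \<beta> * t)) \<longlongrightarrow> 0) at_top"
    using c(1) KX(1) unfolding \<beta>_def by real_asymp
  then have "((\<lambda>t. sqrt (V (y 0) / d * exp (- \<beta> * t))) \<longlongrightarrow> 0) at_top"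
    using tendsto_real_sqrt[OF tendsto_mult_right_zero] unfolding real_sqrt_zero by blast
  moreover have "\<forall>\<^sub>F t in at_top. norm (y t) \<le> sqrt (V (y 0) / d * exp (- \<beta> * t))"
    using eventually_ge_at_top[of "0::real"]
  proof eventually_elim
    case (elim t)
    have "d * (norm (y t))\<^sup>2 \<le> exp (- \<beta> * t) * V (y 0)"
      using d(2) switching_signal_exponential_decay[OF sw cont der rate elim] by (meson order_trans)
    then have "(norm (y t))\<^sup>2 \<le> V (y 0) / d * exp (- \<beta> * t)"
      using d(1) by (simp add: field_simps)
    then show ?case by (rule real_le_rsqrt)
  qed
  ultimately show ?thesis by (rule Lim_null_comparison[rotated])
qed

subsection \<open>Consensus\<close>

lemma disagreement_tendsto_zero:
  fixes L :: "nat \<Rightarrow> real^'n^'n" and Q :: "real^'n^'q" and P :: "real^'n^'n"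
  assumes dimQ: "CARD('q) + 1 = CARD('n)" and QQ: "Q ** transpose Q = mat 1"
    and Q1: "Q *v ones = 0" and L1: "\<And>k. L k *v ones = 0" and P: "pos_def P"
    and lmi: "\<forall>k\<in>{1..m}. neg_def
               (- (Q ** L k ** P ** transpose Q) - (Q ** P ** transpose (L k) ** transpose Q))"
    and sw: "switching_signal m \<sigma>" and sol: "switched_solution L \<sigma> x"
  shows "((\<lambda>t. Q *v x t) \<longlongrightarrow> 0) at_top"
proof -
  define H where "H k = Q ** L k ** transpose Q" for k
  define X where "X = Q ** P ** transpose Q"
  have proj: "L k ** transpose Q ** Q = L k" for k
    by (rule mult_projection_onto_orthonormal_complement[OF dimQ QQ Q1 L1])
  have "H k ** X = Q ** (L k ** transpose Q ** Q) ** P ** transpose Q" for k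
    by (simp add: H_def X_def matrix_mul_assoc)
  then have HX: "H k ** X = Q ** L k ** P ** transpose Q" for k
    by (simp only: proj)
  have "H k ** Q = Q ** (L k ** transpose Q ** Q)" for k
    by (simp add: H_def matrix_mul_assoc)
  then have "Q ** L k = H k ** Q" for k
    by (simp only: proj)
  then have sol_reduced: "switched_solution H \<sigma> (\<lambda>t. Q *v x t)"
    by (rule switched_solution_linear_image[OF sol])
  have "Q *v (transpose Q *v w) = w" for w
    by (simp add: matrix_vector_mul_assoc QQ)
  then have X: "pos_def X"
    unfolding X_def by (intro pos_def_congruence[OF P]) (metis matrix_vector_mult_0_right)
  have "transpose (H k ** X) = Q ** P ** transpose (L k) ** transpose Q" for k
    using P by (simp add: HX pos_def_def symmetric_mat_def matrix_transpose_mul matrix_mul_assoc)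
  with lmi have "\<forall>k\<in>{1..m}. neg_def (- (H k ** X) - transpose (H k ** X))"
    by (simp add: HX)
  then show ?thesis
    by (rule common_lyapunov_convergence[OF sw sol_reduced X])
qed

lemma consensus_of_disagreement_tendsto_zero:
  fixes Q :: "real^'n^'q"
  assumes dimQ: "CARD('q) + 1 = CARD('n)" and QQ: "Q ** transpose Q = mat 1"
    and Q1: "Q *v ones = 0" and bal: "\<forall>k\<in>{1..m}. weight_balanced (L k)"
    and sw: "switching_signal m \<sigma>" and sol: "switched_solution L \<sigma> x"
    and disagreement: "((\<lambda>t. Q *v x t) \<longlongrightarrow> 0) at_top"
  shows "(x \<longlongrightarrow> ((ones \<bullet> x 0) / CARD('n)) *\<^sub>R ones) at_top"
proof -
  define \<alpha> where "\<alpha> = (ones \<bullet> x 0) / CARD('n)"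
  have "((\<lambda>t. transpose Q *v (Q *v x t) + \<alpha> *\<^sub>R ones) \<longlongrightarrow> transpose Q *v 0 + \<alpha> *\<^sub>R ones) at_top"
    by (intro tendsto_add tendsto_const bounded_linear.tendsto[OF matrix_vector_mul_bounded_linear]
        disagreement)
  then have "((\<lambda>t. transpose Q *v (Q *v x t) + \<alpha> *\<^sub>R ones) \<longlongrightarrow> \<alpha> *\<^sub>R ones) at_top"
    by simp
  moreover have "\<forall>\<^sub>F t in at_top. transpose Q *v (Q *v x t) + \<alpha> *\<^sub>R ones = x t"
    using eventually_ge_at_top[of "0::real"]
  proof eventually_elim
    case (elim t)
    then have "ones \<bullet> x t = ones \<bullet> x 0"
      by (rule weight_balanced_average_constant[OF sw sol bal])
    with orthonormal_complement_ones_decomposition[OF dimQ QQ Q1, of "x t"] show ?case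
      by (simp add: \<alpha>_def)
  qed
  ultimately show ?thesis
    unfolding \<alpha>_def by (rule Lim_transform_eventually)
qed

theorem theorem9:
  fixes m :: nat
    and A :: "nat \<Rightarrow> real^'n^'n"
    and Q :: "real^'n^'q"
    and P :: "real^'n^'n"
  assumes dimQ: "CARD('q) + 1 = CARD('n)"
    and bal: "\<forall>k\<in>{1..m}. weight_balanced (signed_laplacian (A k))"
    and eep: "\<forall>k\<in>{1..m}. EEP (- signed_laplacian (A k))"
    and QQ: "Q ** transpose Q = mat 1"
    and Q1: "Q *v ones = 0"
    and Ppd: "pos_def P"
    and lmi: "\<forall>k\<in>{1..m}. neg_def
               (- (Q ** signed_laplacian (A k) ** P ** transpose Q)
                - (Q ** P ** transpose (signed_laplacian (A k)) ** transpose Q))"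
  shows "consensus_set m (\<lambda>k. signed_laplacian (A k))"
  unfolding consensus_set_def
proof (intro allI impI, elim conjE)
  fix \<sigma> and x :: "real \<Rightarrow> real^'n"
  assume sw: "switching_signal m \<sigma>" and sol: "switched_solution (\<lambda>k. signed_laplacian (A k)) \<sigma> x"
  have "((\<lambda>t. Q *v x t) \<longlongrightarrow> 0) at_top"
    by (rule disagreement_tendsto_zero[OF dimQ QQ Q1 signed_laplacian_mult_ones Ppd lmi sw sol])
  then show "\<exists>\<alpha>. (x \<longlongrightarrow> \<alpha> *\<^sub>R ones) at_top"
    using consensus_of_disagreement_tendsto_zero[OF dimQ QQ Q1 bal sw sol] by blast
qed

end
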